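(* Let $A,B$ be rings and $M$ a $(B,A)$-bimodule, and let $T=\begin{pmatrix} A & 0\\ M & B\end{pmatrix}$ be the formal triangular matrix ring. If $T$ is weakly $r$-clean, then $A$ and $B$ are weakly $r$-clean.
   Context: Rings are associative with identity. $T$ consists of matrices $\begin{pmatrix} a & 0\\ m & b\end{pmatrix}$ with $a\in A$, $b\in B$, $m\in M$, with matrix addition and multiplication. $Idem(R)$ denotes idempotents and $Reg(R)=\{r: r=ryr \text{ for some } y\in R\}$ regular elements. An element is weakly $r$-clean if it equals $r+e$ or $r-e$ with $r\in Reg(R)$, $e\in Idem(R)$; a ring is weakly $r$-clean if all its elements are. *)

theory Defs
  imports Main
begin

definition Idem_gen :: "('t \<Rightarrow> 't \<Rightarrow> 't) \<Rightarrow> 't set \<Rightarrow> 't set" where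
  "Idem_gen mult S = {e \<in> S. mult e e = e}"

definition Reg_gen :: "('t \<Rightarrow> 't \<Rightarrow> 't) \<Rightarrow> 't set \<Rightarrow> 't set" where
  "Reg_gen mult S = {r \<in> S. \<exists>y\<in>S. r = mult (mult r y) r}"

definition weakly_r_clean_gen ::
  "('t \<Rightarrow> 't \<Rightarrow> 't) \<Rightarrow> ('t \<Rightarrow> 't \<Rightarrow> 't) \<Rightarrow> ('t \<Rightarrow> 't \<Rightarrow> 't) \<Rightarrow> 't set \<Rightarrow> bool" where
  "weakly_r_clean_gen add sub mult S \<longleftrightarrow>
     (\<forall>x\<in>S. \<exists>r\<in>Reg_gen mult S. \<exists>e\<in>Idem_gen mult S. x = add r e \<or> x = sub r e)"

definition weakly_r_clean_ring :: "'a::ring_1 itself \<Rightarrow> bool" where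
  "weakly_r_clean_ring _ \<longleftrightarrow> weakly_r_clean_gen (+) (-) (*) (UNIV :: 'a set)"

definition bimodule :: "('b::ring_1 \<Rightarrow> 'm::ab_group_add \<Rightarrow> 'm) \<Rightarrow> ('m \<Rightarrow> 'a::ring_1 \<Rightarrow> 'm) \<Rightarrow> bool" where
  "bimodule lact ract \<longleftrightarrow>
     (\<forall>b m m'. lact b (m + m') = lact b m + lact b m') \<and>
     (\<forall>b b' m. lact (b + b') m = lact b m + lact b' m) \<and>
     (\<forall>b b' m. lact (b * b') m = lact b (lact b' m)) \<and>
     (\<forall>m. lact 1 m = m) \<and>
     (\<forall>a m m'. ract (m + m') a = ract m a + ract m' a) \<and>
     (\<forall>a a' m. ract m (a + a') = ract m a + ract m a') \<and>
     (\<forall>a a' m. ract m (a * a') = ract (ract m a) a') \<and>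
     (\<forall>m. ract m 1 = m) \<and>
     (\<forall>b m a. ract (lact b m) a = lact b (ract m a))"

text \<open>The formal triangular matrix ring T = [[A,0],[M,B]]; the matrix [[a,0],[m,b]] is
represented by the triple (a, m, b).\<close>
definition tri_add :: "'a::ring_1 \<times> 'm::ab_group_add \<times> 'b::ring_1 \<Rightarrow> 'a \<times> 'm \<times> 'b \<Rightarrow> 'a \<times> 'm \<times> 'b" where
  "tri_add x y = (case x of (a, m, b) \<Rightarrow> case y of (a', m', b') \<Rightarrow> (a + a', m + m', b + b'))"

definition tri_sub :: "'a::ring_1 \<times> 'm::ab_group_add \<times> 'b::ring_1 \<Rightarrow> 'a \<times> 'm \<times> 'b \<Rightarrow> 'a \<times> 'm \<times> 'b" where
  "tri_sub x y = (case x of (a, m, b) \<Rightarrow> case y of (a', m', b') \<Rightarrow> (a - a', m - m', b - b'))"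

text \<open>[[a,0],[m,b]] * [[a',0],[m',b']] = [[a a', 0],[m a' + b m', b b']].\<close>
definition tri_mult :: "('b::ring_1 \<Rightarrow> 'm::ab_group_add \<Rightarrow> 'm) \<Rightarrow> ('m \<Rightarrow> 'a::ring_1 \<Rightarrow> 'm) \<Rightarrow>
    'a \<times> 'm \<times> 'b \<Rightarrow> 'a \<times> 'm \<times> 'b \<Rightarrow> 'a \<times> 'm \<times> 'b" where
  "tri_mult lact ract x y = (case x of (a, m, b) \<Rightarrow> case y of (a', m', b') \<Rightarrow>
      (a * a', ract m a' + lact b m', b * b'))"

definition tri_weakly_r_clean :: "('b::ring_1 \<Rightarrow> 'm::ab_group_add \<Rightarrow> 'm) \<Rightarrow> ('m \<Rightarrow> 'a::ring_1 \<Rightarrow> 'm) \<Rightarrow> bool" where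
  "tri_weakly_r_clean lact ract \<longleftrightarrow>
     weakly_r_clean_gen tri_add tri_sub (tri_mult lact ract) (UNIV :: ('a \<times> 'm \<times> 'b) set)"

end

theory Submission
  imports Defs
begin

text \<open>The two diagonal projections of the triangular ring onto \<open>A\<close> and \<open>B\<close> are surjective
  maps preserving addition, subtraction and multiplication, and homomorphic images of
  regular elements and idempotents are again regular and idempotent. Hence weak r-cleanness
  passes to surjective homomorphic images, in particular to \<open>A\<close> and \<open>B\<close>.\<close>

lemma Idem_gen_image:
  assumes "\<And>x y. x \<in> S \<Longrightarrow> y \<in> S \<Longrightarrow> f (mult x y) = mult' (f x) (f y)"
    and "e \<in> Idem_gen mult S"
  shows "f e \<in> Idem_gen mult' (f ` S)"
  using assms by (force simp: Idem_gen_def)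

lemma Reg_gen_image:
  assumes mult: "\<And>x y. x \<in> S \<Longrightarrow> y \<in> S \<Longrightarrow> mult x y \<in> S"
    and hom: "\<And>x y. x \<in> S \<Longrightarrow> y \<in> S \<Longrightarrow> f (mult x y) = mult' (f x) (f y)"
    and "r \<in> Reg_gen mult S"
  shows "f r \<in> Reg_gen mult' (f ` S)"
proof -
  from \<open>r \<in> Reg_gen mult S\<close> obtain y where "r \<in> S" "y \<in> S" and r: "r = mult (mult r y) r"
    by (auto simp: Reg_gen_def)
  then have "f r = mult' (mult' (f r) (f y)) (f r)"
    by (metis mult hom)
  with \<open>r \<in> S\<close> \<open>y \<in> S\<close> show ?thesis
    by (auto simp: Reg_gen_def)
qed

lemma weakly_r_clean_gen_image:
  assumes clean: "weakly_r_clean_gen add sub mult S"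
    and mult: "\<And>x y. x \<in> S \<Longrightarrow> y \<in> S \<Longrightarrow> mult x y \<in> S"
    and hom_add: "\<And>x y. x \<in> S \<Longrightarrow> y \<in> S \<Longrightarrow> f (add x y) = add' (f x) (f y)"
    and hom_sub: "\<And>x y. x \<in> S \<Longrightarrow> y \<in> S \<Longrightarrow> f (sub x y) = sub' (f x) (f y)"
    and hom_mult: "\<And>x y. x \<in> S \<Longrightarrow> y \<in> S \<Longrightarrow> f (mult x y) = mult' (f x) (f y)"
  shows "weakly_r_clean_gen add' sub' mult' (f ` S)"
  unfolding weakly_r_clean_gen_def
proof
  fix z assume "z \<in> f ` S"
  then obtain x where "x \<in> S" "z = f x" by blast
  with clean obtain r e where r: "r \<in> Reg_gen mult S" and e: "e \<in> Idem_gen mult S"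
    and x: "x = add r e \<or> x = sub r e"
    by (auto simp: weakly_r_clean_gen_def)
  have "r \<in> S" "e \<in> S"
    using r e by (auto simp: Reg_gen_def Idem_gen_def)
  then have "z = add' (f r) (f e) \<or> z = sub' (f r) (f e)"
    using x \<open>z = f x\<close> hom_add hom_sub by auto
  moreover have "f r \<in> Reg_gen mult' (f ` S)"
    using Reg_gen_image[where f = f and mult' = mult', OF mult hom_mult r] .
  moreover have "f e \<in> Idem_gen mult' (f ` S)"
    using Idem_gen_image[where f = f and mult' = mult', OF hom_mult e] .
  ultimately show "\<exists>r\<in>Reg_gen mult' (f ` S). \<exists>e\<in>Idem_gen mult' (f ` S). z = add' r e \<or> z = sub' r e"
    by blast
qed

lemma tri_weakly_r_clean_imp_fst:
  assumes "tri_weakly_r_clean (lact :: 'b::ring_1 \<Rightarrow> 'm::ab_group_add \<Rightarrow> 'm) (ract :: 'm \<Rightarrow> 'a::ring_1 \<Rightarrow> 'm)"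
  shows "weakly_r_clean_ring TYPE('a)"
proof -
  have "weakly_r_clean_gen (+) (-) (*) (fst ` (UNIV :: ('a \<times> 'm \<times> 'b) set))"
    using assms unfolding tri_weakly_r_clean_def
    by (rule weakly_r_clean_gen_image[where f = fst])
      (auto simp: tri_add_def tri_sub_def tri_mult_def split: prod.splits)
  moreover have "fst ` (UNIV :: ('a \<times> 'm \<times> 'b) set) = UNIV"
    by (rule surjI[where f = "\<lambda>a. (a, undefined)"]) simp
  ultimately show ?thesis
    by (simp add: weakly_r_clean_ring_def)
qed

lemma tri_weakly_r_clean_imp_snd:
  assumes "tri_weakly_r_clean (lact :: 'b::ring_1 \<Rightarrow> 'm::ab_group_add \<Rightarrow> 'm) (ract :: 'm \<Rightarrow> 'a::ring_1 \<Rightarrow> 'm)"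
  shows "weakly_r_clean_ring TYPE('b)"
proof -
  have "weakly_r_clean_gen (+) (-) (*) ((snd \<circ> snd) ` (UNIV :: ('a \<times> 'm \<times> 'b) set))"
    using assms unfolding tri_weakly_r_clean_def
    by (rule weakly_r_clean_gen_image[where f = "snd \<circ> snd"])
      (auto simp: tri_add_def tri_sub_def tri_mult_def split: prod.splits)
  moreover have "(snd \<circ> snd) ` (UNIV :: ('a \<times> 'm \<times> 'b) set) = UNIV"
    by (rule surjI[where f = "\<lambda>b. (undefined, undefined, b)"]) simp
  ultimately show ?thesis
    by (simp add: weakly_r_clean_ring_def)
qed

theorem proposition2p16:
  fixes lact :: "'b::ring_1 \<Rightarrow> 'm::ab_group_add \<Rightarrow> 'm"
    and ract :: "'m \<Rightarrow> 'a::ring_1 \<Rightarrow> 'm"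
  assumes "bimodule lact ract"
    and "tri_weakly_r_clean lact ract"
  shows "weakly_r_clean_ring TYPE('a) \<and> weakly_r_clean_ring TYPE('b)"
  using tri_weakly_r_clean_imp_fst[OF assms(2)] tri_weakly_r_clean_imp_snd[OF assms(2)] by blast

end
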